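(* Let $0<q<1$, $\alpha>-1$ and let $n\ge0$ be an integer. Then \[ \det\left((q^{\alpha+1};q)_{j+k}\,q^{-\binom{j+k+1}{2}-\alpha(j+k)}\right)_{j,k=0}^{n}=\frac{\prod_{m=0}^{n}(q;q)_m\,(q^{\alpha+1};q)_m}{q^{\,n(n+1)(4n+6\alpha+5)/6}} . \]
   Context: For a complex $a$ and $0<q<1$, $(a;q)_\infty=\prod_{i=0}^\infty(1-aq^i)$ and $(a;q)_m=(a;q)_\infty/(aq^m;q)_\infty=\prod_{i=0}^{m-1}(1-aq^i)$ for integers $m\ge0$. *)

theory Defs
  imports Complex_Main "Jordan_Normal_Form.Determinant"
begin

definition qpoch :: "real \<Rightarrow> real \<Rightarrow> nat \<Rightarrow> real" where
  "qpoch a q m = (\<Prod>i<m. 1 - a * q ^ i)"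

end

theory Submission
  imports Defs
begin

text \<open>
  Write the entry of the Hankel matrix as (a;q)_{j+k} q^{e(j+k)} with a = q^{alpha+1} and
  e(m) = -binom(m+1,2) - alpha m.  Since e(j+k) = e(j) + e(k) - jk and
  (a;q)_{j+k} = (a;q)_k q^{jk} P_j(q^{-k}), where P_j(y) = prod_{i<j} (y - a q^i) is a monic
  polynomial of degree j (a Newton basis polynomial), the matrix factors as
  diag(q^{e(j)}) * (P_j(x_k))_{j,k} * diag((a;q)_k q^{e(k)}) with nodes x_k = q^{-k}.
  The middle determinant is a Vandermonde determinant in disguise:
  det (P_j(x_k)) = prod_{j<k} (x_k - x_j), proved by row elimination and Laplace expansion,
  and for the geometric nodes prod_{j<k} (q^{-k} - q^{-j}) = q^{-k^2} (q;q)_k.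
\<close>

lemma det_scale_rows_cols:
  fixes u w :: "nat \<Rightarrow> 'a :: comm_ring_1" and B :: "nat \<Rightarrow> nat \<Rightarrow> 'a"
  shows "det (mat n n (\<lambda>(j,k). u j * w k * B j k))
       = (\<Prod>j<n. u j) * (\<Prod>k<n. w k) * det (mat n n (\<lambda>(j,k). B j k))"
  unfolding det_def'[OF mat_carrier] det_def'[OF mat_carrier] sum_distrib_left
proof (rule sum.cong)
  fix p assume "p \<in> {p. p permutes {0..<n}}"
  then have p: "p permutes {0..<n}" by simp
  have p_range: "p i < n" if "i < n" for i
    using permutes_in_image[OF p] that by simp
  have "(\<Prod>i = 0..<n. w (p i)) = (\<Prod>k<n. w k)"
    using prod.permute[OF p, of w] by (simp add: comp_def atLeast0LessThan)
  then have "(\<Prod>i = 0..<n. mat n n (\<lambda>(j,k). u j * w k * B j k) $$ (i, p i))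
      = (\<Prod>j<n. u j) * (\<Prod>k<n. w k) * (\<Prod>i = 0..<n. mat n n (\<lambda>(j,k). B j k) $$ (i, p i))"
    by (simp add: p_range prod.distrib atLeast0LessThan)
  then show "signof p * (\<Prod>i = 0..<n. mat n n (\<lambda>(j,k). u j * w k * B j k) $$ (i, p i))
      = (\<Prod>j<n. u j) * (\<Prod>k<n. w k) * (signof p * (\<Prod>i = 0..<n. mat n n (\<lambda>(j,k). B j k) $$ (i, p i)))"
    by (simp only: mult_ac)
qed simp

definition bidiag :: "nat \<Rightarrow> (nat \<Rightarrow> 'a :: comm_ring_1) \<Rightarrow> 'a mat" where
  "bidiag n d = mat n n (\<lambda>(j,i). (if i = j then 1 else 0) + (if Suc i = j then d i else 0))"

lemma bidiag_mult_entry: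
  fixes A :: "'a :: comm_ring_1 mat"
  assumes A: "A \<in> carrier_mat n m" and j: "j < n" and k: "k < m"
  shows "(bidiag n d * A) $$ (j,k) = A $$ (j,k) + (if j = 0 then 0 else d (j-1) * A $$ (j-1,k))"
proof -
  have "(bidiag n d * A) $$ (j,k)
      = (\<Sum>i<n. (if i = j then A $$ (i,k) else 0) + (if Suc i = j then d i * A $$ (i,k) else 0))"
    using A j k by (auto simp: bidiag_def scalar_prod_def atLeast0LessThan intro!: sum.cong)
  also have "\<dots> = A $$ (j,k) + (if j = 0 then 0 else d (j-1) * A $$ (j-1,k))"
    using j by (cases j) (simp_all add: sum.distrib)
  finally show ?thesis .
qed

lemma bidiag_carrier: "bidiag n d \<in> carrier_mat n n"
  by (simp add: bidiag_def)

lemma det_bidiag: "det (bidiag n d) = 1"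
  unfolding bidiag_def
  by (subst det_lower_triangular[of n]) (auto simp: prod_list_diag_prod)

definition newton_poly :: "(nat \<Rightarrow> 'a :: comm_ring_1) \<Rightarrow> nat \<Rightarrow> 'a \<Rightarrow> 'a" where
  "newton_poly c j y = (\<Prod>i<j. y - c i)"

lemma newton_poly_Suc: "newton_poly c (Suc j) y = (y - c j) * newton_poly c j y"
  by (simp add: newton_poly_def)

text \<open>Subtracting (x0 - c j) times row j from row j+1 of the Newton-Vandermonde matrix
  turns newton_poly c (j+1) into (y - x0) * newton_poly c j, i.e. it divides out the node x0.\<close>
lemma newton_poly_row_step:
  "newton_poly c (Suc j) y + (c j - x0) * newton_poly c j y = (y - x0) * newton_poly c j y"
  by (simp add: newton_poly_Suc algebra_simps)

lemma det_first_column_unit: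
  fixes f :: "nat \<Rightarrow> nat \<Rightarrow> 'a :: comm_ring_1"
  shows "det (mat (Suc n) (Suc n) (\<lambda>(j,k). if j = 0 then g k else if k = 0 then 0 else f j k))
       = g 0 * det (mat n n (\<lambda>(j,k). f (Suc j) (Suc k)))"
proof -
  let ?N = "mat (Suc n) (Suc n) (\<lambda>(j,k). if j = 0 then g k else if k = 0 then 0 else f j k)"
  have "det ?N = (\<Sum>i<Suc n. ?N $$ (i,0) * cofactor ?N i 0)"
    by (rule laplace_expansion_column) auto
  also have "\<dots> = g 0 * cofactor ?N 0 0"
    by (subst sum.lessThan_Suc_shift) simp
  also have "cofactor ?N 0 0 = det (mat n n (\<lambda>(j,k). f (Suc j) (Suc k)))"
    unfolding cofactor_def
    by (simp, rule arg_cong[where f=det], rule eq_matI, auto simp: mat_delete_def)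
  finally show ?thesis .
qed

text \<open>Induction on n: eliminate the first column by the bidiagonal row operation,
  expand, pull out the factors x k - x 0 and recurse on the remaining nodes.\<close>
lemma det_newton_vandermonde:
  fixes c x :: "nat \<Rightarrow> 'a :: comm_ring_1"
  shows "det (mat n n (\<lambda>(j,k). newton_poly c j (x k))) = (\<Prod>k<n. \<Prod>j<k. x k - x j)"
proof (induction n arbitrary: x)
  case 0
  then show ?case by simp
next
  case (Suc n)
  let ?M = "mat (Suc n) (Suc n) (\<lambda>(j,k). newton_poly c j (x k))"
  let ?N = "mat (Suc n) (Suc n) (\<lambda>(j,k). if j = 0 then 1
              else if k = 0 then 0 else (x k - x 0) * newton_poly c (j-1) (x k))"
  have reduce: "bidiag (Suc n) (\<lambda>i. c i - x 0) * ?M = ?N"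
  proof (rule eq_matI)
    fix j k assume jk: "j < dim_row ?N" "k < dim_col ?N"
    then have "(bidiag (Suc n) (\<lambda>i. c i - x 0) * ?M) $$ (j,k)
        = ?M $$ (j,k) + (if j = 0 then 0 else (c (j-1) - x 0) * ?M $$ (j-1,k))"
      by (intro bidiag_mult_entry) auto
    with jk show "(bidiag (Suc n) (\<lambda>i. c i - x 0) * ?M) $$ (j,k) = ?N $$ (j,k)"
      by (cases j) (auto simp: newton_poly_row_step, simp add: newton_poly_def)
  qed (use bidiag_carrier in auto)
  have "det ?M = det (bidiag (Suc n) (\<lambda>i. c i - x 0)) * det ?M"
    by (simp add: det_bidiag)
  also have "\<dots> = det ?N"
    by (simp only: det_mult[OF bidiag_carrier mat_carrier, symmetric] reduce)
  also have "\<dots> = det (mat n n (\<lambda>(j,k). 1 * (x (Suc k) - x 0) * newton_poly c j (x (Suc k))))"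
    by (subst det_first_column_unit) simp
  also have "\<dots> = (\<Prod>k<n. x (Suc k) - x 0) * (\<Prod>k<n. \<Prod>j<k. x (Suc k) - x (Suc j))"
    using det_scale_rows_cols[of n "\<lambda>_. 1" "\<lambda>k. x (Suc k) - x 0" "\<lambda>j k. newton_poly c j (x (Suc k))"]
      Suc.IH[of "x \<circ> Suc"] by simp
  also have "\<dots> = (\<Prod>k<n. \<Prod>j<Suc k. x (Suc k) - x j)"
    by (simp add: prod.lessThan_Suc_shift prod.distrib del: prod.lessThan_Suc)
  also have "\<dots> = (\<Prod>k<Suc n. \<Prod>j<k. x k - x j)"
    by (simp only: prod.lessThan_Suc_shift[of "\<lambda>k. \<Prod>j<k. x k - x j"]) simp
  finally show ?case .
qed

lemma qpoch_add: "qpoch a q (k + j) = qpoch a q k * (\<Prod>i<j. 1 - a * q ^ (k + i))"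
  by (induction j) (simp_all add: qpoch_def)

definition hankel_exp :: "real \<Rightarrow> nat \<Rightarrow> real" where
  "hankel_exp \<alpha> m = - real (Suc m choose 2) - \<alpha> * real m"

lemma real_Suc_choose_2: "real (Suc m choose 2) = real m * (real m + 1) / 2"
  by (induction m) (simp_all add: numeral_2_eq_2 field_simps)

text \<open>The exponent is quadratic in m, so it splits into a row part, a column part and
  the cross term -jk, which is absorbed by the Newton polynomial at the node q^{-k}.\<close>
lemma hankel_exp_add: "hankel_exp \<alpha> (j + k) = hankel_exp \<alpha> j + hankel_exp \<alpha> k - real (j * k)"
  by (simp add: hankel_exp_def real_Suc_choose_2 field_simps)

lemma sum_hankel_exp:
  "(\<Sum>k<Suc n. 2 * hankel_exp \<alpha> k - real (k * k))
     = - (real n * (real n + 1) * (4 * real n + 6 * \<alpha> + 5) / 6)"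
  by (induction n) (simp_all add: hankel_exp_def real_Suc_choose_2 field_simps)

lemma newton_poly_geometric:
  fixes q :: real assumes q: "0 < q"
  shows "newton_poly (\<lambda>i. a * q ^ i) j (q powr - real k)
       = q powr - real (k * j) * (\<Prod>i<j. 1 - a * q ^ (k + i))"
proof -
  have factor: "q powr - real k - a * q ^ i = q powr - real k * (1 - a * q ^ (k + i))" for i
  proof -
    have "q powr - real k * q ^ (k + i) = q ^ i"
      using q by (simp add: powr_realpow[symmetric] powr_add[symmetric])
    then show ?thesis by (simp add: algebra_simps)
  qed
  have "newton_poly (\<lambda>i. a * q ^ i) j (q powr - real k)
      = (q powr - real k) ^ j * (\<Prod>i<j. 1 - a * q ^ (k + i))"
    by (simp add: newton_poly_def factor prod.distrib)
  then show ?thesis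
    using q by (simp add: powr_power mult.commute)
qed

lemma vandermonde_geometric_nodes:
  fixes q :: real assumes q: "0 < q"
  shows "(\<Prod>j<k. q powr - real k - q powr - real j) = q powr - real (k * k) * qpoch q q k"
proof -
  have "(\<Prod>j<k. q powr - real k - q powr - real j) = (\<Prod>j<k. q powr - real k * (1 - q ^ (k - j)))"
  proof (rule prod.cong)
    fix j assume "j \<in> {..<k}"
    then have "q powr - real k * q ^ (k - j) = q powr - real j"
      using q by (simp add: powr_realpow[symmetric] powr_add[symmetric] of_nat_diff)
    then show "q powr - real k - q powr - real j = q powr - real k * (1 - q ^ (k - j))"
      by (simp add: algebra_simps)
  qed simp
  also have "\<dots> = (q powr - real k) ^ k * (\<Prod>j<k. 1 - q ^ (k - j))"
    by (simp add: prod.distrib)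
  also have "(\<Prod>j<k. 1 - q ^ (k - j)) = qpoch q q k"
    unfolding qpoch_def prod.nat_diff_reindex[symmetric, of "\<lambda>j. 1 - q ^ (k - j)"]
    by (rule prod.cong) (auto simp: Suc_diff_le)
  finally show ?thesis
    using q by (simp add: powr_power mult.commute)
qed

lemma qhankel_entry_factor:
  fixes q :: real assumes q: "0 < q"
  shows "qpoch a q (j + k) * q powr hankel_exp \<alpha> (j + k)
       = q powr hankel_exp \<alpha> j * (qpoch a q k * q powr hankel_exp \<alpha> k)
         * newton_poly (\<lambda>i. a * q ^ i) j (q powr - real k)"
proof -
  have "q powr hankel_exp \<alpha> (j + k)
      = q powr hankel_exp \<alpha> j * q powr hankel_exp \<alpha> k * q powr - real (k * j)"
    unfolding powr_add[symmetric] hankel_exp_add by (simp add: algebra_simps)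
  then show ?thesis
    using qpoch_add[of a q k j] newton_poly_geometric[OF q, of a j k]
    by (simp add: add.commute[of j k] mult_ac)
qed

lemma det_qhankel:
  fixes q a \<alpha> :: real assumes q: "0 < q"
  shows "det (mat N N (\<lambda>(j,k). qpoch a q (j + k) * q powr hankel_exp \<alpha> (j + k)))
       = (\<Prod>k<N. qpoch q q k * qpoch a q k) * q powr (\<Sum>k<N. 2 * hankel_exp \<alpha> k - real (k * k))"
proof -
  define u where "u j = q powr hankel_exp \<alpha> j" for j
  define x where "x k = q powr - real k" for k
  have "mat N N (\<lambda>(j,k). qpoch a q (j + k) * q powr hankel_exp \<alpha> (j + k))
      = mat N N (\<lambda>(j,k). u j * (qpoch a q k * u k) * newton_poly (\<lambda>i. a * q ^ i) j (x k))"
    by (rule eq_matI) (simp_all add: qhankel_entry_factor[OF q] u_def x_def)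
  then have "det (mat N N (\<lambda>(j,k). qpoch a q (j + k) * q powr hankel_exp \<alpha> (j + k)))
      = (\<Prod>j<N. u j) * (\<Prod>k<N. qpoch a q k * u k) * (\<Prod>k<N. \<Prod>j<k. x k - x j)"
    by (simp add: det_scale_rows_cols det_newton_vandermonde)
  also have "\<dots> = (\<Prod>k<N. (qpoch q q k * qpoch a q k) * (u k * u k * q powr - real (k * k)))"
    by (simp add: x_def vandermonde_geometric_nodes[OF q] prod.distrib mult_ac)
  also have "\<dots> = (\<Prod>k<N. qpoch q q k * qpoch a q k) * (\<Prod>k<N. q powr (2 * hankel_exp \<alpha> k - real (k * k)))"
  proof -
    have "u k * u k * q powr - real (k * k) = q powr (2 * hankel_exp \<alpha> k - real (k * k))" for k
      unfolding u_def powr_add[symmetric] by (simp add: algebra_simps)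
    then show ?thesis by (simp add: prod.distrib)
  qed
  finally show ?thesis
    using q by (simp add: powr_sum)
qed

text \<open>The theorem is the case a = q^{alpha+1}, N = n + 1.\<close>
theorem mainTheorem8:
  fixes q \<alpha> :: real and n :: nat
  assumes "0 < q" "q < 1" "\<alpha> > -1"
  shows "det (mat (n+1) (n+1) (\<lambda>(j,k).
            qpoch (q powr (\<alpha>+1)) q (j+k)
            * q powr (- real ((j+k+1) choose 2) - \<alpha> * real (j+k))))
       = (\<Prod>m\<in>{0..n}. qpoch q q m * qpoch (q powr (\<alpha>+1)) q m)
         / q powr (real n * (real n + 1) * (4 * real n + 6 * \<alpha> + 5) / 6)"
proof -
  let ?a = "q powr (\<alpha>+1)"
  have entry: "q powr (- real ((j+k+1) choose 2) - \<alpha> * real (j+k)) = q powr hankel_exp \<alpha> (j+k)"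
    for j k :: nat by (simp add: hankel_exp_def)
  have "det (mat (n+1) (n+1) (\<lambda>(j,k).
            qpoch ?a q (j+k) * q powr (- real ((j+k+1) choose 2) - \<alpha> * real (j+k))))
      = det (mat (n+1) (n+1) (\<lambda>(j,k). qpoch ?a q (j+k) * q powr hankel_exp \<alpha> (j+k)))"
    by (simp only: entry)
  also have "\<dots> = (\<Prod>m<n+1. qpoch q q m * qpoch ?a q m)
      * q powr (\<Sum>k<n+1. 2 * hankel_exp \<alpha> k - real (k * k))"
    by (rule det_qhankel[OF \<open>0 < q\<close>])
  also have "(\<Sum>k<n+1. 2 * hankel_exp \<alpha> k - real (k * k))
      = - (real n * (real n + 1) * (4 * real n + 6 * \<alpha> + 5) / 6)"
    using sum_hankel_exp by simp
  also have "{..<n+1} = {0..n}" by auto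
  finally show ?thesis by (simp only: powr_minus divide_inverse)
qed

end
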